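(* Let $A=\{v_1,v_2\}$, $B=\{v_3,v_4\}$, $C=\{v_5,v_6\}$, $D=\{v_7,v_8\}$ and let $V_1$ be the access structure on the participant set $Q=\{v_1,\dots,v_8\}$ induced by the Vamos matroid with dealer $v_1$ (as described in the context). Then for every secret sharing scheme $\Sigma$ for $V_1$ we have $\rho(\Sigma)\le \frac{19}{21}$, and consequently the information rate satisfies $\rho(V_1)\le \frac{19}{21}$.
   Context: The Vamos matroid on $Q=\{v_1,\dots,v_8\}=A\cup B\cup C\cup D$ (with $A,B,C,D$ as in the claim) is the matroid whose independent sets are all subsets of $Q$ of size at most $4$ except $A\cup B$, $A\cup C$, $B\cup C$, $B\cup D$, $C\cup D$. A circuit is a minimal dependent set. With dealer $d=v_1$, the access structure $V_1$ is taken on all eight elements of $Q$ (the dealer is treated as a participant who alone is qualified): a set $X\subseteq Q$ is qualified iff $d\in X$ or $X$ contains a set $Y\subseteq Q\setminus\{d\}$ such that $Y\cup\{d\}$ is a circuit. A secret sharing scheme for an access structure $\Gamma$ on a finite participant set $P$ is a family of jointly distributed discrete random variables: a secret $S$ and one share for each participant $x\in P$; for nonempty $X\subseteq P\cup\{S\}$, $H(X)$ denotes the joint Shannon entropy of the corresponding variables and $H(X|Y)=H(X\cup Y)-H(Y)$. It is required that $H(S|X)=0$ for every $X\in\Gamma$ and $H(S|X)=H(S)$ for every nonempty $X\subseteq P$ with $X\notin\Gamma$. The information rate of the scheme is $\rho(\Sigma)=\min_{x\in P} H(S)/H(\{x\})$ (here $P=Q$, including the dealer), and the information rate $\rho(\Gamma)$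 of the access structure is the supremum of $\rho(\Sigma)$ over all secret sharing schemes $\Sigma$ for $\Gamma$ (with $H(S)>0$). *)

theory Defs
  imports "HOL-Probability.Probability_Mass_Function" "HOL-Library.FuncSet"
    "HOL-Library.Extended_Real"
begin

text \<open>A family of jointly distributed discrete random variables indexed by 'i with
values in 'v is a probability mass function p on outcomes 'i => 'v; the variable with
index i is the projection to coordinate i.\<close>

definition entropy :: "('i \<Rightarrow> 'v) pmf \<Rightarrow> 'i set \<Rightarrow> real" where
  "entropy p X =
     (let q = map_pmf (\<lambda>\<omega>. restrict \<omega> X) p
      in - (\<Sum>y\<in>set_pmf q. pmf q y * log 2 (pmf q y)))"

definition cond_entropy :: "('i \<Rightarrow> 'v) pmf \<Rightarrow> 'i set \<Rightarrow> 'i set \<Rightarrow> real" where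
  "cond_entropy p X Y = entropy p (X \<union> Y) - entropy p Y"

definition ss_scheme :: "('i \<Rightarrow> 'v) pmf \<Rightarrow> 'i \<Rightarrow> 'i set \<Rightarrow> 'i set set \<Rightarrow> bool" where
  "ss_scheme p s P \<Gamma> \<longleftrightarrow>
     finite (set_pmf p) \<and> s \<notin> P \<and>
     (\<forall>X\<in>\<Gamma>. cond_entropy p {s} X = 0) \<and>
     (\<forall>X. X \<subseteq> P \<and> X \<noteq> {} \<and> X \<notin> \<Gamma> \<longrightarrow> cond_entropy p {s} X = entropy p {s})"

definition scheme_rate :: "('i \<Rightarrow> 'v) pmf \<Rightarrow> 'i \<Rightarrow> 'i set \<Rightarrow> ereal" where
  "scheme_rate p s P =
     (INF x\<in>P. if entropy p {x} = 0 then \<infinity> else ereal (entropy p {s} / entropy p {x}))"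

definition access_rate :: "nat \<Rightarrow> nat set \<Rightarrow> nat set set \<Rightarrow> ereal" where
  "access_rate s P \<Gamma> =
     (SUP p\<in>{p :: (nat \<Rightarrow> nat) pmf. ss_scheme p s P \<Gamma> \<and> entropy p {s} > 0}.
        scheme_rate p s P)"

text \<open>v_i is represented by the natural number i; index 0 is the secret.\<close>

definition vQ :: "nat set" where "vQ = {1..8}"
definition vA :: "nat set" where "vA = {1,2}"
definition vB :: "nat set" where "vB = {3,4}"
definition vC :: "nat set" where "vC = {5,6}"
definition vD :: "nat set" where "vD = {7,8}"

definition vamos_indep :: "nat set \<Rightarrow> bool" where
  "vamos_indep X \<longleftrightarrow> X \<subseteq> vQ \<and> card X \<le> 4 \<and>
     X \<notin> {vA \<union> vB, vA \<union> vC, vB \<union> vC, vB \<union> vD, vC \<union> vD}"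

definition vamos_circuit :: "nat set \<Rightarrow> bool" where
  "vamos_circuit X \<longleftrightarrow> X \<subseteq> vQ \<and> \<not> vamos_indep X \<and> (\<forall>Y. Y \<subset> X \<longrightarrow> vamos_indep Y)"

definition vdealer :: nat where "vdealer = 1"

definition V1 :: "nat set set" where
  "V1 = {X. X \<subseteq> vQ \<and> (vdealer \<in> X \<or>
           (\<exists>Y. Y \<subseteq> vQ - {vdealer} \<and> Y \<subseteq> X \<and> vamos_circuit (Y \<union> {vdealer})))}"

end

theory Submission
  imports Defs
begin

text \<open>The entropies of the secret and the shares of a scheme for V1 form a polymatroid in
  which the secret is independent of every unqualified set and determined by every qualified
  one. We adjoin a copy of the pair (secret, v2) over {v3, v4, v5, v6}: two new variables,
  indexed 9 and 10, that are jointly distributed with v3, ..., v6 like the secret and v2, and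
  conditionally independent of all original variables given v3, ..., v6. A nonnegative
  combination of Shannon inequalities for the extended family, access-structure constraints and
  copy constraints then yields 9 H(S) \<le> 4 H(v2) + H(v3) + H(v4) + H(v5) + H(v6), so some
  share has entropy at least 9/8 H(S) and the rate is at most 8/9 < 19/21.\<close>

definition rv_entropy :: "'a pmf \<Rightarrow> ('a \<Rightarrow> 'b) \<Rightarrow> real" where
  "rv_entropy p f = (let q = map_pmf f p in - (\<Sum>y\<in>set_pmf q. pmf q y * log 2 (pmf q y)))"

definition fiber_prob :: "'a pmf \<Rightarrow> ('a \<Rightarrow> 'b) \<Rightarrow> 'a \<Rightarrow> real" where
  "fiber_prob p f w = (\<Sum>w'\<in>{w'\<in>set_pmf p. f w' = f w}. pmf p w')"

lemma entropy_eq_rv_entropy: "entropy p X = rv_entropy p (\<lambda>w. restrict w X)"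
  unfolding entropy_def rv_entropy_def by simp

lemma rv_entropy_map_pmf: "rv_entropy (map_pmf m p) f = rv_entropy p (f \<circ> m)"
  unfolding rv_entropy_def by (simp add: map_pmf_comp comp_def)

lemma fiber_prob_sum_if:
  assumes "finite A" "set_pmf p \<subseteq> A"
  shows "fiber_prob p f w = (\<Sum>w'\<in>A. if f w' = f w then pmf p w' else 0)"
proof -
  have "fiber_prob p f w = (\<Sum>w'\<in>{w'\<in>A. f w' = f w}. pmf p w')"
    unfolding fiber_prob_def using assms
    by (intro sum.mono_neutral_left) (auto simp: set_pmf_iff)
  then show ?thesis
    using assms by (simp add: sum.inter_filter)
qed

lemma fiber_prob_eq_measure:
  assumes "finite (set_pmf p)"
  shows "fiber_prob p f w = measure_pmf.prob p {w'. f w' = f w}"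
proof -
  have "measure_pmf.prob p {w'. f w' = f w} = measure_pmf.prob p ({w'. f w' = f w} \<inter> set_pmf p)"
    by (simp add: measure_Int_set_pmf)
  also have "\<dots> = (\<Sum>w'\<in>{w'. f w' = f w} \<inter> set_pmf p. pmf p w')"
    using assms by (intro measure_measure_pmf_finite) auto
  finally show ?thesis
    unfolding fiber_prob_def by (simp add: Int_def conj_commute)
qed

lemma fiber_prob_pos:
  assumes "finite (set_pmf p)" "w \<in> set_pmf p"
  shows "fiber_prob p f w > 0"
proof -
  have "0 < pmf p w" using assms by (simp add: pmf_positive)
  also have "pmf p w \<le> fiber_prob p f w"
    unfolding fiber_prob_def using assms by (intro member_le_sum) auto
  finally show ?thesis .
qed

lemma fiber_prob_nonneg: "fiber_prob p f w \<ge> 0"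
  unfolding fiber_prob_def by (simp add: sum_nonneg)

lemma fiber_prob_eq: "f w' = f w \<Longrightarrow> fiber_prob p f w' = fiber_prob p f w"
  unfolding fiber_prob_def by simp

lemma fiber_prob_cong:
  assumes "\<And>w'. w' \<in> set_pmf p \<Longrightarrow> f w' = f w \<longleftrightarrow> g w' = g w"
  shows "fiber_prob p f w = fiber_prob p g w"
  unfolding fiber_prob_def using assms by (intro sum.cong) auto

lemma rv_entropy_fiber_prob:
  assumes fin: "finite (set_pmf p)"
  shows "rv_entropy p f = - (\<Sum>w\<in>set_pmf p. pmf p w * log 2 (fiber_prob p f w))"
proof -
  let ?q = "map_pmf f p" and ?S = "set_pmf p"
  have pmf_q: "pmf ?q (f w) = fiber_prob p f w" for w
    by (simp add: pmf_map fiber_prob_eq_measure[OF fin] vimage_def)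
  have "(\<Sum>y\<in>set_pmf ?q. pmf ?q y * log 2 (pmf ?q y))
      = (\<Sum>y\<in>f ` ?S. \<Sum>w\<in>{w\<in>?S. f w = y}. pmf p w * log 2 (fiber_prob p f w))"
  proof (rule sum.cong)
    fix y assume "y \<in> f ` ?S"
    then obtain w0 where w0: "y = f w0" by auto
    have "(\<Sum>w\<in>{w\<in>?S. f w = y}. pmf p w * log 2 (fiber_prob p f w))
        = (\<Sum>w\<in>{w\<in>?S. f w = y}. pmf p w) * log 2 (pmf ?q y)"
      unfolding sum_distrib_right using pmf_q by (intro sum.cong) auto
    also have "\<dots> = pmf ?q y * log 2 (pmf ?q y)"
      using pmf_q[of w0] w0 by (simp add: fiber_prob_def)
    finally show "pmf ?q y * log 2 (pmf ?q y)
        = (\<Sum>w\<in>{w\<in>?S. f w = y}. pmf p w * log 2 (fiber_prob p f w))" ..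
  qed simp
  also have "\<dots> = (\<Sum>w\<in>?S. pmf p w * log 2 (fiber_prob p f w))"
    by (rule sum.image_gen[symmetric]) (rule fin)
  finally show ?thesis unfolding rv_entropy_def by simp
qed

lemma rv_entropy_cong:
  assumes "finite (set_pmf p)"
    and "\<And>w w'. w \<in> set_pmf p \<Longrightarrow> w' \<in> set_pmf p \<Longrightarrow> f w' = f w \<longleftrightarrow> g w' = g w"
  shows "rv_entropy p f = rv_entropy p g"
  using assms fiber_prob_cong[of p f _ g] by (simp add: rv_entropy_fiber_prob)

lemma rv_entropy_const: "finite (set_pmf p) \<Longrightarrow> rv_entropy p (\<lambda>w. c) = 0"
  by (simp add: rv_entropy_fiber_prob fiber_prob_def sum_pmf_eq_1)

lemma sum_fiber_normalized_le_1:
  assumes fin: "finite (set_pmf p)"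
  shows "(\<Sum>w\<in>set_pmf p. if h w = y then pmf p w / fiber_prob p h w else 0) \<le> 1"
proof (cases "\<exists>w0\<in>set_pmf p. h w0 = y")
  case False
  then show ?thesis by (simp add: sum.neutral)
next
  case True
  then obtain w0 where w0: "w0 \<in> set_pmf p" "h w0 = y" by blast
  have "(\<Sum>w\<in>set_pmf p. if h w = y then pmf p w / fiber_prob p h w else 0)
      = (\<Sum>w\<in>set_pmf p. if h w = h w0 then pmf p w else 0) / fiber_prob p h w0"
    unfolding sum_divide_distrib using w0(2) by (intro sum.cong) (auto simp: fiber_prob_eq)
  also have "\<dots> = 1"
    using fiber_prob_pos[OF fin w0(1), of h] by (simp add: fiber_prob_sum_if[OF fin order_refl])
  finally show ?thesis by simp
qed

lemma sum_fiber_prob_ratio_eq: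
  fixes f :: "'a \<Rightarrow> 'b" and g :: "'a \<Rightarrow> 'c" and k :: "'a \<Rightarrow> 'd"
  assumes fin: "finite (set_pmf p)"
  defines "A \<equiv> fiber_prob p (\<lambda>w. (f w, g w, k w))" and "B \<equiv> fiber_prob p k"
    and "C \<equiv> fiber_prob p (\<lambda>w. (f w, k w))" and "D \<equiv> fiber_prob p (\<lambda>w. (g w, k w))"
  shows "(\<Sum>w\<in>set_pmf p. pmf p w * (C w * D w) / (A w * B w))
    = (\<Sum>w1\<in>set_pmf p. \<Sum>w2\<in>set_pmf p. if k w1 = k w2 then pmf p w1 * pmf p w2 / B w1 *
         (\<Sum>w\<in>set_pmf p. if (f w, g w, k w) = (f w1, g w2, k w1) then pmf p w / A w else 0)
       else 0)"
proof -
  let ?S = "set_pmf p" and ?p = "pmf p"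
  define F where "F w w1 w2 = (if (f w1, k w1) = (f w, k w) \<and> (g w2, k w2) = (g w, k w)
      then ?p w * ?p w1 * ?p w2 / (A w * B w) else 0)" for w w1 w2
  have expand: "?p w * (C w * D w) / (A w * B w) = (\<Sum>w1\<in>?S. \<Sum>w2\<in>?S. F w w1 w2)" for w
  proof -
    have "C w * D w = (\<Sum>w1\<in>?S. \<Sum>w2\<in>?S. (if (f w1, k w1) = (f w, k w) then ?p w1 else 0) *
        (if (g w2, k w2) = (g w, k w) then ?p w2 else 0))"
      unfolding C_def D_def by (simp add: fiber_prob_sum_if[OF fin order_refl] sum_product)
    then have "?p w * (C w * D w) / (A w * B w) =
        (\<Sum>w1\<in>?S. \<Sum>w2\<in>?S. ?p w * ((if (f w1, k w1) = (f w, k w) then ?p w1 else 0) *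
          (if (g w2, k w2) = (g w, k w) then ?p w2 else 0)) / (A w * B w))"
      by (simp add: sum_distrib_left sum_divide_distrib)
    also have "\<dots> = (\<Sum>w1\<in>?S. \<Sum>w2\<in>?S. F w w1 w2)"
      unfolding F_def by (intro sum.cong refl) auto
    finally show ?thesis .
  qed
  have collapse: "(\<Sum>w\<in>?S. F w w1 w2) = (if k w1 = k w2 then ?p w1 * ?p w2 / B w1 *
      (\<Sum>w\<in>?S. if (f w, g w, k w) = (f w1, g w2, k w1) then ?p w / A w else 0) else 0)" for w1 w2
  proof -
    have "F w w1 w2 = (if k w1 = k w2 then ?p w1 * ?p w2 / B w1 *
        (if (f w, g w, k w) = (f w1, g w2, k w1) then ?p w / A w else 0) else 0)" for w
    proof (cases "(f w, g w, k w) = (f w1, g w2, k w1)")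
      case True
      then have "B w = B w1" unfolding B_def by (intro fiber_prob_eq) simp
      then show ?thesis unfolding F_def using True by (auto simp: ac_simps)
    qed (auto simp: F_def)
    then show ?thesis by (simp add: sum_distrib_left)
  qed
  have "(\<Sum>w\<in>?S. ?p w * (C w * D w) / (A w * B w)) = (\<Sum>w1\<in>?S. \<Sum>w2\<in>?S. \<Sum>w\<in>?S. F w w1 w2)"
    unfolding expand by (subst sum.swap) (intro sum.cong refl sum.swap)
  then show ?thesis by (simp only: collapse)
qed

text \<open>Summing first over w, the left-hand side becomes a sum over pairs (w1, w2) with
  k w1 = k w2; each inner sum is at most 1, and what remains adds up to 1.\<close>

lemma sum_fiber_prob_ratio_le_1:
  fixes f :: "'a \<Rightarrow> 'b" and g :: "'a \<Rightarrow> 'c" and k :: "'a \<Rightarrow> 'd"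
  assumes fin: "finite (set_pmf p)"
  shows "(\<Sum>w\<in>set_pmf p. pmf p w * (fiber_prob p (\<lambda>w. (f w, k w)) w * fiber_prob p (\<lambda>w. (g w, k w)) w)
            / (fiber_prob p (\<lambda>w. (f w, g w, k w)) w * fiber_prob p k w)) \<le> 1"
proof -
  let ?S = "set_pmf p" and ?p = "pmf p" and ?B = "fiber_prob p k"
  let ?E = "\<lambda>w1 w2. \<Sum>w\<in>?S. if (f w, g w, k w) = (f w1, g w2, k w1)
    then ?p w / fiber_prob p (\<lambda>w. (f w, g w, k w)) w else 0"
  have "(\<Sum>w1\<in>?S. \<Sum>w2\<in>?S. if k w1 = k w2 then ?p w1 * ?p w2 / ?B w1 * ?E w1 w2 else 0)
      \<le> (\<Sum>w1\<in>?S. \<Sum>w2\<in>?S. if k w2 = k w1 then ?p w1 / ?B w1 * ?p w2 else 0)"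
  proof (intro sum_mono)
    fix w1 w2
    have "?p w1 * ?p w2 / ?B w1 * ?E w1 w2 \<le> ?p w1 * ?p w2 / ?B w1 * 1"
      by (intro mult_left_mono sum_fiber_normalized_le_1[OF fin]) (simp add: fiber_prob_nonneg)
    then show "(if k w1 = k w2 then ?p w1 * ?p w2 / ?B w1 * ?E w1 w2 else 0)
        \<le> (if k w2 = k w1 then ?p w1 / ?B w1 * ?p w2 else 0)" by auto
  qed
  also have "\<dots> = (\<Sum>w1\<in>?S. ?p w1 / ?B w1 * ?B w1)"
    by (intro sum.cong refl)
      (simp add: fiber_prob_sum_if[OF fin order_refl, of k] sum_distrib_left if_distrib cong: if_cong)
  also have "\<dots> = (\<Sum>w1\<in>?S. ?p w1)"
    using fiber_prob_pos[OF fin, of _ k] by (intro sum.cong refl) (metis less_irrefl nonzero_eq_divide_eq)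
  also have "\<dots> = 1"
    using sum_pmf_eq_1[OF fin order_refl] .
  finally show ?thesis
    unfolding sum_fiber_prob_ratio_eq[OF fin] .
qed

lemma log2_le_ln_bound: "x > 0 \<Longrightarrow> log 2 x \<le> (x - 1) / ln 2"
  unfolding log_def by (intro divide_right_mono ln_le_minus_one) auto

lemma rv_entropy_submodular:
  fixes f :: "'a \<Rightarrow> 'b" and g :: "'a \<Rightarrow> 'c" and k :: "'a \<Rightarrow> 'd"
  assumes fin: "finite (set_pmf p)"
  shows "rv_entropy p (\<lambda>w. (f w, g w, k w)) + rv_entropy p k
    \<le> rv_entropy p (\<lambda>w. (f w, k w)) + rv_entropy p (\<lambda>w. (g w, k w))"
proof -
  let ?S = "set_pmf p" and ?p = "pmf p"
  let ?A = "fiber_prob p (\<lambda>w. (f w, g w, k w))" and ?B = "fiber_prob p k"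
  let ?C = "fiber_prob p (\<lambda>w. (f w, k w))" and ?D = "fiber_prob p (\<lambda>w. (g w, k w))"
  let ?L = "\<lambda>w. log 2 (?C w) + log 2 (?D w) - log 2 (?A w) - log 2 (?B w)"
  have pointwise: "?p w * ?L w \<le> (?p w * (?C w * ?D w) / (?A w * ?B w) - ?p w) / ln 2"
    if w: "w \<in> ?S" for w
  proof -
    have pos: "?A w > 0" "?B w > 0" "?C w > 0" "?D w > 0"
      using fiber_prob_pos[OF fin w] by auto
    have "?L w = log 2 (?C w * ?D w / (?A w * ?B w))"
      using pos by (simp add: log_mult log_divide)
    also have "\<dots> \<le> (?C w * ?D w / (?A w * ?B w) - 1) / ln 2"
      using pos by (intro log2_le_ln_bound) simp
    finally have "?p w * ?L w \<le> ?p w * ((?C w * ?D w / (?A w * ?B w) - 1) / ln 2)"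
      by (intro mult_left_mono) simp_all
    also have "\<dots> = (?p w * (?C w * ?D w) / (?A w * ?B w) - ?p w) / ln 2"
      by (simp add: right_diff_distrib diff_divide_distrib)
    finally show ?thesis .
  qed
  have "(\<Sum>w\<in>?S. ?p w * ?L w) \<le> (\<Sum>w\<in>?S. (?p w * (?C w * ?D w) / (?A w * ?B w) - ?p w) / ln 2)"
    using pointwise by (intro sum_mono) auto
  also have "\<dots> = ((\<Sum>w\<in>?S. ?p w * (?C w * ?D w) / (?A w * ?B w)) - (\<Sum>w\<in>?S. ?p w)) / ln 2"
    by (simp only: sum_divide_distrib[symmetric] sum_subtractf)
  also have "\<dots> \<le> 0"
    using sum_fiber_prob_ratio_le_1[OF fin, of f k g] sum_pmf_eq_1[OF fin order_refl]
    by (intro divide_nonpos_pos) auto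
  finally have "(\<Sum>w\<in>?S. ?p w * ?L w) \<le> 0" .
  moreover have "(\<Sum>w\<in>?S. ?p w * ?L w)
     = (\<Sum>w\<in>?S. ?p w * log 2 (?C w)) + (\<Sum>w\<in>?S. ?p w * log 2 (?D w))
       - (\<Sum>w\<in>?S. ?p w * log 2 (?A w)) - (\<Sum>w\<in>?S. ?p w * log 2 (?B w))"
    by (simp add: right_diff_distrib distrib_left sum.distrib sum_subtractf)
  ultimately show ?thesis
    unfolding rv_entropy_fiber_prob[OF fin] by linarith
qed

lemma rv_entropy_modular_if_factorizes:
  fixes f :: "'a \<Rightarrow> 'b" and g :: "'a \<Rightarrow> 'c" and k :: "'a \<Rightarrow> 'd"
  assumes fin: "finite (set_pmf p)"
    and factor: "\<And>w. w \<in> set_pmf p \<Longrightarrow> fiber_prob p (\<lambda>w. (f w, g w, k w)) w * fiber_prob p k w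
      = fiber_prob p (\<lambda>w. (f w, k w)) w * fiber_prob p (\<lambda>w. (g w, k w)) w"
  shows "rv_entropy p (\<lambda>w. (f w, g w, k w)) + rv_entropy p k
    = rv_entropy p (\<lambda>w. (f w, k w)) + rv_entropy p (\<lambda>w. (g w, k w))"
proof -
  let ?p = "pmf p"
  let ?A = "fiber_prob p (\<lambda>w. (f w, g w, k w))" and ?B = "fiber_prob p k"
  let ?C = "fiber_prob p (\<lambda>w. (f w, k w))" and ?D = "fiber_prob p (\<lambda>w. (g w, k w))"
  have "?p w * log 2 (?A w) + ?p w * log 2 (?B w) = ?p w * log 2 (?C w) + ?p w * log 2 (?D w)"
    if w: "w \<in> set_pmf p" for w
  proof -
    have pos: "?A w > 0" "?B w > 0" "?C w > 0" "?D w > 0"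
      using fiber_prob_pos[OF fin w] by auto
    have "log 2 (?A w) + log 2 (?B w) = log 2 (?A w * ?B w)"
      using pos by (simp add: log_mult)
    also have "\<dots> = log 2 (?C w) + log 2 (?D w)"
      using pos factor[OF w] by (simp add: log_mult)
    finally have "log 2 (?A w) + log 2 (?B w) = log 2 (?C w) + log 2 (?D w)" .
    then show ?thesis by (simp add: distrib_left[symmetric])
  qed
  then have "(\<Sum>w\<in>set_pmf p. ?p w * log 2 (?A w) + ?p w * log 2 (?B w))
      = (\<Sum>w\<in>set_pmf p. ?p w * log 2 (?C w) + ?p w * log 2 (?D w))"
    by (rule sum.cong[OF refl])
  then show ?thesis
    unfolding rv_entropy_fiber_prob[OF fin] by (simp add: sum.distrib)
qed

lemma restrict_eq_iff: "restrict w X = restrict w' X \<longleftrightarrow> (\<forall>i\<in>X. w i = w' i)"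
  by (auto simp: restrict_def fun_eq_iff)

lemma entropy_submodular:
  assumes fin: "finite (set_pmf p)"
  shows "entropy p (X \<union> Y) + entropy p (X \<inter> Y) \<le> entropy p X + entropy p Y"
proof -
  let ?XY = "\<lambda>w. restrict w (X \<inter> Y)"
  have "entropy p (X \<union> Y) = rv_entropy p (\<lambda>w. (restrict w X, restrict w Y, ?XY w))"
    "entropy p X = rv_entropy p (\<lambda>w. (restrict w X, ?XY w))"
    "entropy p Y = rv_entropy p (\<lambda>w. (restrict w Y, ?XY w))"
    unfolding entropy_eq_rv_entropy using fin
    by (intro rv_entropy_cong; auto simp: restrict_eq_iff)+
  then show ?thesis
    unfolding entropy_eq_rv_entropy[of p "X \<inter> Y"] using rv_entropy_submodular[OF fin] by simp
qed

lemma entropy_mono: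
  assumes fin: "finite (set_pmf p)" and "Y \<subseteq> X"
  shows "entropy p Y \<le> entropy p X"
proof -
  have "entropy p X = rv_entropy p (\<lambda>w. (restrict w X, restrict w X, restrict w Y))"
    "entropy p X = rv_entropy p (\<lambda>w. (restrict w X, restrict w Y))"
    unfolding entropy_eq_rv_entropy using fin \<open>Y \<subseteq> X\<close>
    by (intro rv_entropy_cong; auto simp: restrict_eq_iff)+
  then show ?thesis
    using rv_entropy_submodular[OF fin, of "\<lambda>w. restrict w X" "\<lambda>w. restrict w X" "\<lambda>w. restrict w Y"]
    unfolding entropy_eq_rv_entropy[of p Y] by simp
qed

lemma entropy_empty: "finite (set_pmf p) \<Longrightarrow> entropy p {} = 0"
  by (simp add: entropy_eq_rv_entropy restrict_def rv_entropy_const)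

definition polymatroid :: "('i set \<Rightarrow> real) \<Rightarrow> bool" where
  "polymatroid h \<longleftrightarrow> h {} = 0 \<and> (\<forall>X Y. X \<subseteq> Y \<longrightarrow> h X \<le> h Y)
     \<and> (\<forall>X Y. h (X \<union> Y) + h (X \<inter> Y) \<le> h X + h Y)"

lemma polymatroid_entropy: "finite (set_pmf p) \<Longrightarrow> polymatroid (entropy p)"
  unfolding polymatroid_def by (simp add: entropy_empty entropy_mono entropy_submodular)

definition cond_ent :: "('i set \<Rightarrow> real) \<Rightarrow> 'i set \<Rightarrow> 'i set \<Rightarrow> real" where
  "cond_ent h X Z = h (X \<union> Z) - h Z"

definition mutual_info :: "('i set \<Rightarrow> real) \<Rightarrow> 'i set \<Rightarrow> 'i set \<Rightarrow> 'i set \<Rightarrow> real" where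
  "mutual_info h X Y Z = h (X \<union> Z) + h (Y \<union> Z) - h (X \<union> Y \<union> Z) - h Z"

lemma cond_ent_nonneg: "polymatroid h \<Longrightarrow> 0 \<le> cond_ent h X Z"
  unfolding polymatroid_def cond_ent_def by simp

lemma mutual_info_nonneg:
  assumes "polymatroid h"
  shows "0 \<le> mutual_info h X Y Z"
proof -
  have "(X \<union> Z) \<union> (Y \<union> Z) = X \<union> Y \<union> Z"
    by blast
  then have "h (X \<union> Y \<union> Z) + h ((X \<union> Z) \<inter> (Y \<union> Z)) \<le> h (X \<union> Z) + h (Y \<union> Z)"
    using assms unfolding polymatroid_def by metis
  moreover have "h Z \<le> h ((X \<union> Z) \<inter> (Y \<union> Z))"
    using assms unfolding polymatroid_def by (meson Int_greatest sup_ge2)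
  ultimately show ?thesis unfolding mutual_info_def by linarith
qed

text \<open>Draw w from p, then w' from p conditioned on r w' = r w: the two components have law p
  and are conditionally independent given r.\<close>

definition copy_coupling :: "'a pmf \<Rightarrow> ('a \<Rightarrow> 'c) \<Rightarrow> ('a \<times> 'a) pmf" where
  "copy_coupling p r = bind_pmf p (\<lambda>w. map_pmf (\<lambda>w'. (w, w')) (cond_pmf p {w'. r w' = r w}))"

lemma set_pmf_copy_coupling:
  assumes "x \<in> set_pmf (copy_coupling p r)"
  shows "fst x \<in> set_pmf p \<and> snd x \<in> set_pmf p \<and> r (snd x) = r (fst x)"
proof -
  obtain w where w: "w \<in> set_pmf p" "x \<in> set_pmf (map_pmf (\<lambda>w'. (w, w')) (cond_pmf p {w'. r w' = r w}))"
    using assms unfolding copy_coupling_def by auto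
  have ne: "set_pmf p \<inter> {w'. r w' = r w} \<noteq> {}" using w(1) by auto
  from w(2) show ?thesis using w(1) by (auto simp: set_cond_pmf[OF ne])
qed

lemma finite_copy_coupling:
  assumes "finite (set_pmf p)"
  shows "finite (set_pmf (copy_coupling p r))"
proof (rule finite_subset)
  show "set_pmf (copy_coupling p r) \<subseteq> set_pmf p \<times> set_pmf p"
    by (auto dest: set_pmf_copy_coupling)
qed (use assms in simp)

lemma map_fst_copy_coupling: "map_pmf fst (copy_coupling p r) = p"
  unfolding copy_coupling_def map_bind_pmf map_pmf_comp by (simp add: bind_return_pmf')

lemma map_snd_copy_coupling: "map_pmf snd (copy_coupling p r) = p"
proof -
  have "map_pmf snd (copy_coupling p r) = bind_pmf p (\<lambda>w. cond_pmf p {w'. r w = r w'})"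
    unfolding copy_coupling_def map_bind_pmf map_pmf_comp by (simp add: eq_commute)
  also have "\<dots> = p"
  proof (rule bind_cond_pmf_cancel)
    fix x y assume "x \<in> set_pmf p" "y \<in> set_pmf p" "r x = r y"
    then show "measure_pmf.prob p {y. r x = r y} = measure_pmf.prob p {x. r x = r y}"
      by (metis (no_types, lifting))
  qed auto
  finally show ?thesis .
qed

lemma pmf_copy_coupling:
  assumes fin: "finite (set_pmf p)"
  shows "pmf (copy_coupling p r) (a, b) = pmf p a * (if r b = r a then pmf p b / fiber_prob p r a else 0)"
proof (cases "a \<in> set_pmf p")
  case False
  then have "(a, b) \<notin> set_pmf (copy_coupling p r)"
    using set_pmf_copy_coupling[of "(a, b)"] by auto
  then show ?thesis using False by (simp add: set_pmf_iff)
next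
  case True
  have ne: "set_pmf p \<inter> {w'. r w' = r a} \<noteq> {}" using True by auto
  have "pmf (copy_coupling p r) (a, b) = (\<integral>w. pmf (map_pmf (\<lambda>w'. (w, w')) (cond_pmf p {w'. r w' = r w})) (a, b) \<partial>p)"
    unfolding copy_coupling_def pmf_bind ..
  also have "\<dots> = (\<Sum>w\<in>set_pmf p. pmf p w *\<^sub>R pmf (map_pmf (\<lambda>w'. (w, w')) (cond_pmf p {w'. r w' = r w})) (a, b))"
    by (rule integral_measure_pmf[OF fin]) (auto simp: set_pmf_iff)
  also have "\<dots> = (\<Sum>w\<in>set_pmf p. if w = a then pmf p a * pmf (cond_pmf p {w'. r w' = r a}) b else 0)"
  proof (intro sum.cong refl)
    fix w assume "w \<in> set_pmf p"
    show "pmf p w *\<^sub>R pmf (map_pmf (\<lambda>w'. (w, w')) (cond_pmf p {w'. r w' = r w})) (a, b) =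
      (if w = a then pmf p a * pmf (cond_pmf p {w'. r w' = r a}) b else 0)"
    proof (cases "w = a")
      case True
      have "pmf (map_pmf (Pair a) (cond_pmf p {w'. r w' = r a})) (Pair a b) = pmf (cond_pmf p {w'. r w' = r a}) b"
        by (rule pmf_map_inj') (simp add: inj_on_def)
      then show ?thesis using True by simp
    next
      case False
      then have "pmf (map_pmf (\<lambda>w'. (w, w')) (cond_pmf p {w'. r w' = r w})) (a, b) = 0"
        by (intro pmf_map_outside) auto
      then show ?thesis using False by simp
    qed
  qed
  also have "\<dots> = pmf p a * pmf (cond_pmf p {w'. r w' = r a}) b"
    using True fin by simp
  also have "\<dots> = pmf p a * (if r b = r a then pmf p b / fiber_prob p r a else 0)"
    using fiber_prob_eq_measure[OF fin, of r a] by (simp add: pmf_cond[OF ne])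
  finally show ?thesis .
qed

lemma fiber_prob_copy_coupling:
  assumes fin: "finite (set_pmf p)" and ab: "(a, b) \<in> set_pmf (copy_coupling p r)"
    and det: "\<And>w. u w = u a \<Longrightarrow> r w = r a"
  shows "fiber_prob (copy_coupling p r) (\<lambda>x. (u (fst x), v (snd x))) (a, b) = fiber_prob p u a * fiber_prob p (\<lambda>w. (r w, v w)) b / fiber_prob p r a"
proof -
  let ?S = "set_pmf p"
  have ab': "a \<in> ?S" "b \<in> ?S" "r b = r a" using set_pmf_copy_coupling[OF ab] by auto
  have pos: "fiber_prob p r a > 0" using fiber_prob_pos[OF fin ab'(1)] .
  have "fiber_prob (copy_coupling p r) (\<lambda>x. (u (fst x), v (snd x))) (a, b) =
      (\<Sum>x'\<in>?S \<times> ?S. if (u (fst x'), v (snd x')) = (u a, v b) then pmf (copy_coupling p r) x' else 0)"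
  proof -
    have sub: "set_pmf (copy_coupling p r) \<subseteq> ?S \<times> ?S" using set_pmf_copy_coupling[of _ p r] by force
    show ?thesis
      using fiber_prob_sum_if[OF _ sub, of "\<lambda>x. (u (fst x), v (snd x))" "(a, b)"] fin by simp
  qed
  also have "\<dots> = (\<Sum>w\<in>?S. \<Sum>w'\<in>?S. if (u w, v w') = (u a, v b) then pmf (copy_coupling p r) (w, w') else 0)"
    by (simp only: sum.cartesian_product) (rule sum.cong[OF refl], clarsimp)
  also have "\<dots> = (\<Sum>w\<in>?S. \<Sum>w'\<in>?S. (if u w = u a then pmf p w else 0) *
      (if (r w', v w') = (r b, v b) then pmf p w' else 0) / fiber_prob p r a)"
  proof (intro sum.cong refl)
    fix w w' assume "w \<in> ?S" "w' \<in> ?S"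
    show "(if (u w, v w') = (u a, v b) then pmf (copy_coupling p r) (w, w') else 0) =
      (if u w = u a then pmf p w else 0) * (if (r w', v w') = (r b, v b) then pmf p w' else 0) / fiber_prob p r a"
    proof (cases "u w = u a")
      case True
      then have rw: "r w = r a" by (rule det)
      then have "fiber_prob p r w = fiber_prob p r a" by (rule fiber_prob_eq)
      then show ?thesis using True rw ab'(3) by (auto simp: pmf_copy_coupling[OF fin])
    qed simp
  qed
  also have "\<dots> = (\<Sum>w\<in>?S. if u w = u a then pmf p w else 0) *
      (\<Sum>w'\<in>?S. if (r w', v w') = (r b, v b) then pmf p w' else 0) / fiber_prob p r a"
    by (simp add: sum_product sum_divide_distrib)
  also have "\<dots> = fiber_prob p u a * fiber_prob p (\<lambda>w. (r w, v w)) b / fiber_prob p r a"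
    by (simp add: fiber_prob_sum_if[OF fin order_refl])
  finally show ?thesis .
qed

lemma fiber_prob_copy_coupling_fst:
  assumes fin: "finite (set_pmf p)" and ab: "(a, b) \<in> set_pmf (copy_coupling p r)"
    and det: "\<And>w. u w = u a \<Longrightarrow> r w = r a"
  shows "fiber_prob (copy_coupling p r) (\<lambda>x. u (fst x)) (a, b) = fiber_prob p u a"
proof -
  have rb: "r b = r a" and a: "a \<in> set_pmf p"
    using set_pmf_copy_coupling[OF ab] by auto
  have "fiber_prob (copy_coupling p r) (\<lambda>x. u (fst x)) (a, b)
      = fiber_prob (copy_coupling p r) (\<lambda>x. (u (fst x), (\<lambda>_. ()) (snd x))) (a, b)"
    by (intro fiber_prob_cong) auto
  also have "\<dots> = fiber_prob p u a * fiber_prob p (\<lambda>w. (r w, ())) b / fiber_prob p r a"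
    by (rule fiber_prob_copy_coupling[OF fin ab det])
  also have "fiber_prob p (\<lambda>w. (r w, ())) b = fiber_prob p r a"
    using rb by (simp add: fiber_prob_def)
  finally show ?thesis
    using fiber_prob_pos[OF fin a, of r] by simp
qed

lemma fiber_prob_copy_coupling_snd:
  assumes fin: "finite (set_pmf p)" and ab: "(a, b) \<in> set_pmf (copy_coupling p r)"
  shows "fiber_prob (copy_coupling p r) (\<lambda>x. (r (fst x), v (snd x))) (a, b)
    = fiber_prob p (\<lambda>w. (r w, v w)) b"
  using fiber_prob_copy_coupling[OF fin ab, of r v] fiber_prob_pos[OF fin, of a r]
    set_pmf_copy_coupling[OF ab] by simp

lemma copy_coupling_cond_indep:
  fixes f :: "'a \<Rightarrow> 'b" and g :: "'a \<Rightarrow> 'd" and r :: "'a \<Rightarrow> 'c"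
  assumes fin: "finite (set_pmf p)" and det: "\<And>w w'. f w = f w' \<Longrightarrow> r w = r w'"
  defines "J \<equiv> copy_coupling p r"
  shows "rv_entropy J (\<lambda>x. (f (fst x), g (snd x), r (fst x))) + rv_entropy J (\<lambda>x. r (fst x))
    = rv_entropy J (\<lambda>x. (f (fst x), r (fst x))) + rv_entropy J (\<lambda>x. (g (snd x), r (fst x)))"
  unfolding J_def
proof (rule rv_entropy_modular_if_factorizes[OF finite_copy_coupling[OF fin]])
  fix x assume x: "x \<in> set_pmf (copy_coupling p r)"
  obtain a b where ab: "x = (a, b)" by (cases x)
  have J: "(a, b) \<in> set_pmf (copy_coupling p r)" using x ab by simp
  have a: "a \<in> set_pmf p" using set_pmf_copy_coupling[OF J] by simp
  let ?fr = "\<lambda>w. (f w, r w)" and ?rg = "\<lambda>w. (r w, g w)"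
  have "fiber_prob (copy_coupling p r) (\<lambda>x. (f (fst x), g (snd x), r (fst x))) (a, b)
      = fiber_prob (copy_coupling p r) (\<lambda>x. (?fr (fst x), g (snd x))) (a, b)"
    by (intro fiber_prob_cong) auto
  also have "\<dots> = fiber_prob p ?fr a * fiber_prob p ?rg b / fiber_prob p r a"
    by (rule fiber_prob_copy_coupling[OF fin J, where u = ?fr]) simp
  finally have A: "fiber_prob (copy_coupling p r) (\<lambda>x. (f (fst x), g (snd x), r (fst x))) (a, b)
      = fiber_prob p ?fr a * fiber_prob p ?rg b / fiber_prob p r a" .
  have B: "fiber_prob (copy_coupling p r) (\<lambda>x. r (fst x)) (a, b) = fiber_prob p r a"
    by (rule fiber_prob_copy_coupling_fst[OF fin J]) simp
  have C: "fiber_prob (copy_coupling p r) (\<lambda>x. (f (fst x), r (fst x))) (a, b) = fiber_prob p ?fr a"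
    by (rule fiber_prob_copy_coupling_fst[OF fin J, where u = ?fr]) simp
  have "fiber_prob (copy_coupling p r) (\<lambda>x. (g (snd x), r (fst x))) (a, b)
      = fiber_prob (copy_coupling p r) (\<lambda>x. (r (fst x), g (snd x))) (a, b)"
    by (intro fiber_prob_cong) auto
  also have "\<dots> = fiber_prob p ?rg b"
    by (rule fiber_prob_copy_coupling_snd[OF fin J])
  finally have D: "fiber_prob (copy_coupling p r) (\<lambda>x. (g (snd x), r (fst x))) (a, b) = fiber_prob p ?rg b" .
  show "fiber_prob (copy_coupling p r) (\<lambda>x. (f (fst x), g (snd x), r (fst x))) x
      * fiber_prob (copy_coupling p r) (\<lambda>x. r (fst x)) x
    = fiber_prob (copy_coupling p r) (\<lambda>x. (f (fst x), r (fst x))) x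
      * fiber_prob (copy_coupling p r) (\<lambda>x. (g (snd x), r (fst x))) x"
    unfolding ab A B C D using fiber_prob_pos[OF fin a, of r] by simp
qed

definition copy_merge :: "'i set \<Rightarrow> ('i \<Rightarrow> 'i) \<Rightarrow> ('i \<Rightarrow> 'v) \<times> ('i \<Rightarrow> 'v) \<Rightarrow> 'i \<Rightarrow> 'v" where
  "copy_merge N src x i = (if i \<in> N then snd x (src i) else fst x i)"

text \<open>The coordinates in N are overwritten by the coordinates src ` N of a second draw, which
  agrees with the first on Z and is conditionally independent of it given Z.\<close>

definition copy_pmf :: "('i \<Rightarrow> 'v) pmf \<Rightarrow> 'i set \<Rightarrow> 'i set \<Rightarrow> ('i \<Rightarrow> 'i) \<Rightarrow> ('i \<Rightarrow> 'v) pmf" where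
  "copy_pmf p Z N src = map_pmf (copy_merge N src) (copy_coupling p (\<lambda>w. restrict w Z))"

lemma finite_copy_pmf: "finite (set_pmf p) \<Longrightarrow> finite (set_pmf (copy_pmf p Z N src))"
  unfolding copy_pmf_def by (simp add: finite_copy_coupling)

lemma entropy_copy_pmf:
  "entropy (copy_pmf p Z N src) W
     = rv_entropy (copy_coupling p (\<lambda>w. restrict w Z)) (\<lambda>x. restrict (copy_merge N src x) W)"
  unfolding copy_pmf_def entropy_eq_rv_entropy rv_entropy_map_pmf by (simp add: comp_def)

lemma entropy_eq_copy_coupling:
  "entropy p W = rv_entropy (copy_coupling p r) (\<lambda>x. restrict (fst x) W)"
  "entropy p W = rv_entropy (copy_coupling p r) (\<lambda>x. restrict (snd x) W)"
  using rv_entropy_map_pmf[of fst "copy_coupling p r"] rv_entropy_map_pmf[of snd "copy_coupling p r"]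
  by (simp_all add: map_fst_copy_coupling map_snd_copy_coupling entropy_eq_rv_entropy comp_def)

lemma copy_pmf_entropy_disjoint:
  assumes "W \<inter> N = {}"
  shows "entropy (copy_pmf p Z N src) W = entropy p W"
  unfolding entropy_copy_pmf entropy_eq_copy_coupling(1)[of p W "\<lambda>w. restrict w Z"]
  using assms by (intro arg_cong[where f = "rv_entropy _"]) (auto simp: restrict_def copy_merge_def fun_eq_iff)

lemma copy_pmf_entropy_copy:
  assumes fin: "finite (set_pmf p)" and "W \<subseteq> Z" "Z \<inter> N = {}"
  shows "entropy (copy_pmf p Z N src) (W \<union> N) = entropy p (W \<union> src ` N)"
  unfolding entropy_copy_pmf entropy_eq_copy_coupling(2)[of p _ "\<lambda>w. restrict w Z"]
proof (intro rv_entropy_cong finite_copy_coupling fin)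
  let ?J = "copy_coupling p (\<lambda>w. restrict w Z)"
  fix x x' assume x: "x \<in> set_pmf ?J" and x': "x' \<in> set_pmf ?J"
  have "fst x i = snd x i" "fst x' i = snd x' i" "i \<notin> N" if "i \<in> W" for i
    using set_pmf_copy_coupling[OF x] set_pmf_copy_coupling[OF x'] that assms(2,3)
    by (auto simp: restrict_eq_iff)
  then show "restrict (copy_merge N src x') (W \<union> N) = restrict (copy_merge N src x) (W \<union> N)
      \<longleftrightarrow> restrict (snd x') (W \<union> src ` N) = restrict (snd x) (W \<union> src ` N)"
    unfolding restrict_eq_iff copy_merge_def by auto
qed

lemma copy_pmf_cond_indep:
  assumes fin: "finite (set_pmf p)" and "Z \<subseteq> X" "X \<inter> N = {}"
  shows "mutual_info (entropy (copy_pmf p Z N src)) X N Z = 0"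
proof -
  let ?r = "\<lambda>w. restrict w Z" and ?f = "\<lambda>w. restrict w X" and ?g = "\<lambda>w. restrict w (src ` N)"
  let ?J = "copy_coupling p ?r" and ?q = "copy_pmf p Z N src"
  have finJ: "finite (set_pmf ?J)" using finite_copy_coupling[OF fin] .
  have ent: "entropy ?q (X \<union> N) = rv_entropy ?J (\<lambda>x. (?f (fst x), ?g (snd x), ?r (fst x)))"
    "entropy ?q Z = rv_entropy ?J (\<lambda>x. ?r (fst x))"
    "entropy ?q X = rv_entropy ?J (\<lambda>x. (?f (fst x), ?r (fst x)))"
    "entropy ?q (Z \<union> N) = rv_entropy ?J (\<lambda>x. (?g (snd x), ?r (fst x)))"
    unfolding entropy_copy_pmf using assms
    by (intro rv_entropy_cong[OF finJ]; auto simp: restrict_eq_iff copy_merge_def dest: set_pmf_copy_coupling)+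
  have indep: "rv_entropy ?J (\<lambda>x. (?f (fst x), ?g (snd x), ?r (fst x))) + rv_entropy ?J (\<lambda>x. ?r (fst x))
      = rv_entropy ?J (\<lambda>x. (?f (fst x), ?r (fst x))) + rv_entropy ?J (\<lambda>x. (?g (snd x), ?r (fst x)))"
    using assms(2) by (intro copy_coupling_cond_indep[OF fin]) (auto simp only: restrict_eq_iff)
  have sets: "X \<union> Z = X" "N \<union> Z = Z \<union> N" "X \<union> N \<union> Z = X \<union> N"
    using assms by blast+
  show ?thesis
    unfolding mutual_info_def sets using ent indep by linarith
qed

lemma vamos_indep_of_card_le_3:
  assumes "X \<subseteq> vQ" "card X \<le> 3"
  shows "vamos_indep X"
proof -
  have "card (vA \<union> vB) = 4" "card (vA \<union> vC) = 4" "card (vB \<union> vC) = 4"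
    "card (vB \<union> vD) = 4" "card (vC \<union> vD) = 4"
    by (simp_all add: vA_def vB_def vC_def vD_def)
  then show ?thesis using assms unfolding vamos_indep_def by auto
qed

lemma vamos_circuit_of_card_5:
  assumes "C \<subseteq> vQ" "card C = 5" "\<not> vA \<union> vB \<subseteq> C" "\<not> vA \<union> vC \<subseteq> C"
    "\<not> vB \<union> vC \<subseteq> C" "\<not> vB \<union> vD \<subseteq> C" "\<not> vC \<union> vD \<subseteq> C"
  shows "vamos_circuit C"
  unfolding vamos_circuit_def
proof (intro conjI allI impI)
  show "C \<subseteq> vQ" "\<not> vamos_indep C"
    using assms(1,2) by (simp_all add: vamos_indep_def)
  fix Y assume "Y \<subset> C"
  moreover have "card Y < card C"
    using \<open>Y \<subset> C\<close> assms(2) by (intro psubset_card_mono) (auto intro: card_ge_0_finite)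
  ultimately show "vamos_indep Y" using assms unfolding vamos_indep_def by auto
qed

lemma vamos_circuit_of_card_4:
  assumes "C \<subseteq> vQ" "card C = 4" "\<not> vamos_indep C"
  shows "vamos_circuit C"
  unfolding vamos_circuit_def
proof (intro conjI allI impI)
  show "C \<subseteq> vQ" "\<not> vamos_indep C" by fact+
  fix Y assume "Y \<subset> C"
  moreover have "card Y < card C"
    using \<open>Y \<subset> C\<close> assms(2) by (intro psubset_card_mono) (auto intro: card_ge_0_finite)
  ultimately show "vamos_indep Y"
    using assms(1,2) by (intro vamos_indep_of_card_le_3) auto
qed

lemma V1_memberI:
  assumes "X \<subseteq> vQ" "Y \<subseteq> X" "1 \<notin> Y" "vamos_circuit (Y \<union> {1})"
  shows "X \<in> V1"
proof -
  have "Y \<subseteq> vQ - {1}" using assms(1-3) by auto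
  then show ?thesis unfolding V1_def vdealer_def using assms(1,2,4) by blast
qed

text \<open>For a set X of at most four participants without the dealer, a circuit Y \<union> {1} with
  Y \<subseteq> X would have at most five elements; it is excluded by the five dependent
  four-element sets unless it is X \<union> {1} with X itself dependent.\<close>

lemma V1_not_memberI:
  assumes X: "X \<subseteq> vQ" "1 \<notin> X" "card X \<le> 4" "\<not> {2,3,4} \<subseteq> X" "\<not> {2,5,6} \<subseteq> X"
    and dep: "card X = 4 \<Longrightarrow> \<not> vamos_indep X"
  shows "X \<notin> V1"
proof
  assume "X \<in> V1"
  then obtain Y where Y: "Y \<subseteq> vQ - {1}" "Y \<subseteq> X" "vamos_circuit (Y \<union> {1})"
    using X(2) unfolding V1_def vdealer_def by auto
  have finX: "finite X" using X(1) finite_subset by (auto simp: vQ_def)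
  show False
  proof (cases "Y = X \<and> card X = 4")
    case True
    have "X \<subset> Y \<union> {1}" using True X(2) by auto
    then have "vamos_indep X" using Y(3) unfolding vamos_circuit_def by blast
    then show False using dep True by simp
  next
    case False
    have "card Y \<le> 3"
    proof (cases "Y = X")
      case True then show ?thesis using False X(3) by auto
    next
      case False
      then have "card Y < card X" using Y(2) finX by (intro psubset_card_mono) auto
      then show ?thesis using X(3) by simp
    qed
    moreover have "finite Y" using finX Y(2) finite_subset by auto
    ultimately have "card (Y \<union> {1}) \<le> 4" by (simp add: card_insert_if)
    moreover have "Y \<union> {1} \<subseteq> vQ" using Y(1) by (auto simp: vQ_def)
    moreover have "Y \<union> {1} \<noteq> vA \<union> vB"
    proof
      assume "Y \<union> {1} = vA \<union> vB"
      then have "{2,3,4} \<subseteq> Y \<union> {1}" unfolding vA_def vB_def by auto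
      then show False using X(4) Y(2) by auto
    qed
    moreover have "Y \<union> {1} \<noteq> vA \<union> vC"
    proof
      assume "Y \<union> {1} = vA \<union> vC"
      then have "{2,5,6} \<subseteq> Y \<union> {1}" unfolding vA_def vC_def by auto
      then show False using X(5) Y(2) by auto
    qed
    moreover have "1 \<notin> vB \<union> vC" "1 \<notin> vB \<union> vD" "1 \<notin> vC \<union> vD"
      by (auto simp: vB_def vC_def vD_def)
    then have "Y \<union> {1} \<noteq> vB \<union> vC" "Y \<union> {1} \<noteq> vB \<union> vD" "Y \<union> {1} \<noteq> vC \<union> vD"
      by blast+
    ultimately have "vamos_indep (Y \<union> {1})" unfolding vamos_indep_def by auto
    then show False using Y(3) unfolding vamos_circuit_def by blast
  qed
qed

lemma V1_unqualified:
  "{2,3} \<notin> V1" "{2,4} \<notin> V1" "{2,3,6} \<notin> V1" "{2,3,7} \<notin> V1" "{2,7,8} \<notin> V1"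
  "{3,4,5} \<notin> V1" "{3,6,8} \<notin> V1" "{3,4,5,6} \<notin> V1" "{3,4,7,8} \<notin> V1" "{5,6,7,8} \<notin> V1"
  by (rule V1_not_memberI; auto simp: vQ_def vamos_indep_def vA_def vB_def vC_def vD_def)+

lemma V1_qualified:
  "{2,3,4} \<in> V1" "{2,5,6} \<in> V1"
  "{2,3,6,8} \<in> V1" "{2,3,7,8} \<in> V1" "{3,4,5,7} \<in> V1" "{3,4,5,8} \<in> V1" "{3,6,7,8} \<in> V1"
proof -
  show "{2,3,4} \<in> V1" "{2,5,6} \<in> V1"
    by (rule V1_memberI[OF _ order_refl], auto simp: vQ_def,
        rule vamos_circuit_of_card_4, auto simp: vQ_def vamos_indep_def vA_def vB_def vC_def vD_def)+
  show "{2,3,6,8} \<in> V1" "{2,3,7,8} \<in> V1" "{3,4,5,7} \<in> V1" "{3,4,5,8} \<in> V1" "{3,6,7,8} \<in> V1"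
    by (rule V1_memberI[OF _ order_refl], auto simp: vQ_def,
        rule vamos_circuit_of_card_5, auto simp: vQ_def vA_def vB_def vC_def vD_def)+
qed

text \<open>Indices 9 and 10 play the roles of the copies of the secret 0 and of v2. The weights were
  found by linear programming: shannon is a nonnegative combination of Shannon inequalities,
  vanishing one of quantities that vanish by hypothesis, and 2 (4 h{2} + ... - 9 h{0}) is
  their difference.\<close>

lemma vamos_copy_polymatroid_bound:
  fixes h :: "nat set \<Rightarrow> real"
  assumes h: "polymatroid h"
    and secret_indep: "\<And>X. X \<subseteq> vQ \<Longrightarrow> X \<noteq> {} \<Longrightarrow> X \<notin> V1 \<Longrightarrow> mutual_info h {0} X {} = 0"
    and secret_determined: "\<And>X. X \<in> V1 \<Longrightarrow> cond_ent h {0} X = 0"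
    and copy: "\<And>W. W \<subseteq> {3,4,5,6} \<Longrightarrow> h (W \<union> {9,10}) = h (W \<union> {0,2})"
    and copy_indep: "mutual_info h {0,1,2,3,4,5,6,7,8} {9,10} {3,4,5,6} = 0"
  shows "9 * h {0} \<le> 4 * h {2} + h {3} + h {4} + h {5} + h {6}"
proof -
  define shannon where "shannon =
      8 * cond_ent h {2} {0,1,3,4,5,6,7,8,9,10} + 2 * cond_ent h {3} {0,1,2,4,5,6,7,8,9,10}
      + 2 * cond_ent h {4} {0,1,2,3,5,6,7,8,9,10} + 2 * cond_ent h {5} {0,1,2,3,4,6,7,8,9,10}
      + 2 * cond_ent h {6} {0,1,2,3,4,5,7,8,9,10} + mutual_info h {0} {4} {3,6,7,8,9,10}
      + mutual_info h {0} {5} {3,6,7,8} + mutual_info h {0} {6} {2,3,4,5,7,8,9,10}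
      + mutual_info h {0} {7} {3,4,5,8} + 2 * mutual_info h {0} {7} {2,8,9,10}
      + 2 * mutual_info h {0} {8} {2,9,10} + 2 * mutual_info h {0} {9,10} {2,3,4}
      + 2 * mutual_info h {0} {9,10} {2,5,6} + mutual_info h {0} {9,10} {3,4,5,7,8}
      + mutual_info h {0} {9,10} {3,5,6,7,8} + mutual_info h {1} {2} {0,5,6,7,8}
      + 6 * mutual_info h {1} {2} {0,3,4,5,6,7,8} + mutual_info h {1} {2} {0,3,4,7,8,9,10}
      + mutual_info h {1} {3} {0,5,6,7,8} + mutual_info h {1} {3} {0,2,4,5,6,7,8,9,10}
      + mutual_info h {1} {4} {0,3,5,6,7,8,9,10} + mutual_info h {1} {4} {0,2,3,5,6,7,8,9,10}
      + mutual_info h {1} {5} {0,2,3,4,6,7,9,10} + mutual_info h {1} {5} {0,2,3,4,6,8,9,10}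
      + mutual_info h {1} {6} {0,2,3,4,7} + mutual_info h {1} {6} {0,2,3,4,5,7,8,9,10}
      + mutual_info h {1} {9,10} {0,2,3,4,6,7} + mutual_info h {1} {9,10} {0,3,4,7,8}
      + 3 * mutual_info h {1} {9,10} {0,2,5,6,7,8} + mutual_info h {1} {9,10} {0,3,5,6,7,8}
      + 4 * mutual_info h {2} {3} {4} + 2 * mutual_info h {2} {3} {0,1,5,6,7,8}
      + mutual_info h {2} {3} {9,10} + 3 * mutual_info h {2} {4} {}
      + 2 * mutual_info h {2} {4} {3,9,10} + 2 * mutual_info h {2} {4} {0,1,3,5,6,7,8,9,10}
      + 4 * mutual_info h {2} {5} {6} + 2 * mutual_info h {2} {5} {6,9,10}
      + mutual_info h {2} {5} {0,3,4,6,8,9,10} + mutual_info h {2} {5} {0,1,3,4,6,7,8,9,10}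
      + 6 * mutual_info h {2} {6} {} + mutual_info h {2} {6} {0,1,3,4,7,8}
      + mutual_info h {2} {6} {3,5,7,8,9,10} + 6 * mutual_info h {2} {7} {0,3,4,5,6,8}
      + mutual_info h {2} {7} {0,3,4,5,9,10} + mutual_info h {2} {7} {0,3,5,6,8,9,10}
      + mutual_info h {2} {8} {3} + 6 * mutual_info h {2} {8} {0,3,4,5,6}
      + mutual_info h {2} {8} {7,9,10} + mutual_info h {2} {9,10} {3}
      + 2 * mutual_info h {2} {9,10} {6} + mutual_info h {2} {9,10} {7,8}
      + mutual_info h {2} {9,10} {0,3,4,7,8} + 2 * mutual_info h {2} {9,10} {0,1,3,5,6,7,8}
      + 7 * mutual_info h {2} {9,10} {0,1,3,4,5,6,7,8} + 2 * mutual_info h {3} {4} {}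
      + mutual_info h {3} {4} {0,2,5,6,7,8,9,10} + mutual_info h {3} {4} {0,1,2,5,6,7,8,9,10}
      + 2 * mutual_info h {3} {5} {0,2,9,10} + 2 * mutual_info h {3} {5} {6,7,8,9,10}
      + mutual_info h {3} {6} {0,2,5,9,10} + mutual_info h {3} {6} {0,2,4,5,7,9,10}
      + mutual_info h {3} {6} {7,8,9,10} + mutual_info h {3} {6} {4,7,8,9,10}
      + mutual_info h {3} {7} {6,8} + mutual_info h {3} {7} {4,9,10} + mutual_info h {3} {8} {}
      + mutual_info h {3} {8} {2,7} + mutual_info h {3} {9,10} {}
      + 4 * mutual_info h {3} {9,10} {0,1,2,5,6,7,8} + mutual_info h {4} {5} {0,2,3,9,10}
      + mutual_info h {4} {5} {0,3,6,8,9,10} + mutual_info h {4} {5} {0,2,3,6,8,9,10}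
      + mutual_info h {4} {5} {3,7,8,9,10} + mutual_info h {4} {6} {0,2,5,9,10}
      + mutual_info h {4} {6} {0,2,3,8,9,10} + mutual_info h {4} {6} {7,8,9,10}
      + mutual_info h {4} {6} {2,3,5,7,8,9,10} + mutual_info h {4} {7} {}
      + mutual_info h {4} {7} {0,2,3,5,6,8,9,10} + mutual_info h {4} {8} {0,2,3,7}
      + mutual_info h {4} {8} {0,2,3,9,10} + mutual_info h {4} {9,10} {7}
      + 4 * mutual_info h {4} {9,10} {0,1,2,3,5,6,7,8} + 2 * mutual_info h {5} {6} {}
      + mutual_info h {5} {6} {0,3,4,7,8,9,10} + mutual_info h {5} {6} {0,1,2,3,4,7,8,9,10}
      + mutual_info h {5} {7} {3,4} + mutual_info h {5} {7} {0,1,2,3,4,6,8,9,10}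
      + mutual_info h {5} {8} {0,2,3,6} + mutual_info h {5} {8} {0,1,2,3,4,7,9,10}
      + 2 * mutual_info h {5} {9,10} {0,2,7,8} + mutual_info h {5} {9,10} {0,1,2,3,4,7,8}
      + mutual_info h {5} {9,10} {0,1,3,4,6,7,8} + mutual_info h {6} {7} {8}
      + mutual_info h {6} {7} {0,2,4,5,9,10} + mutual_info h {6} {8} {2,3}
      + mutual_info h {6} {8} {0,1,2,3,4,5,7,9,10} + mutual_info h {6} {9,10} {0,1,2,3,4,7}
      + 2 * mutual_info h {6} {9,10} {0,2,5,7,8} + mutual_info h {6} {9,10} {0,1,2,3,4,5,7,8}
      + mutual_info h {7} {9,10} {2} + mutual_info h {7} {9,10} {3,4}
      + mutual_info h {7} {9,10} {0,3,4,5} + mutual_info h {7} {9,10} {0,3,6,8}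
      + 2 * mutual_info h {7} {9,10} {5,6,8} + 2 * mutual_info h {8} {9,10} {5,6}
      + mutual_info h {8} {9,10} {0,2,3,5,6} + 2 * mutual_info h {8} {9,10} {3,4,7}
      + mutual_info h {8} {9,10} {0,1,2,3,4,6,7}"
  define vanishing where "vanishing =
      mutual_info h {0} {2,3} {} + mutual_info h {0} {2,4} {} + 6 * cond_ent h {0} {2,3,4}
      + mutual_info h {0} {2,3,6} {} + mutual_info h {0} {2,3,7} {} + 6 * cond_ent h {0} {2,5,6}
      + 2 * mutual_info h {0} {2,7,8} {} + mutual_info h {0} {3,4,5} {}
      + mutual_info h {0} {3,6,8} {} + cond_ent h {0} {2,3,6,8} + cond_ent h {0} {2,3,7,8}
      + 6 * mutual_info h {0} {3,4,5,6} {} + cond_ent h {0} {3,4,5,7} + cond_ent h {0} {3,4,5,8}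
      + 2 * mutual_info h {0} {3,4,7,8} {} + 2 * cond_ent h {0} {3,6,7,8}
      + 2 * mutual_info h {0} {5,6,7,8} {} + (h ({3} \<union> {0,2}) - h ({3} \<union> {9,10}))
      + (h ({4} \<union> {0,2}) - h ({4} \<union> {9,10}))
      + 4 * (h ({3,4} \<union> {9,10}) - h ({3,4} \<union> {0,2}))
      + 4 * (h ({5,6} \<union> {9,10}) - h ({5,6} \<union> {0,2}))
      + 6 * (h ({3,4,5,6} \<union> {0,2}) - h ({3,4,5,6} \<union> {9,10}))
      + 6 * mutual_info h {0,1,2,3,4,5,6,7,8} {9,10} {3,4,5,6}"
  have "0 \<le> shannon"
    unfolding shannon_def using h
    by (intro add_nonneg_nonneg mult_nonneg_nonneg; simp add: cond_ent_nonneg mutual_info_nonneg)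
  moreover have "vanishing = 0"
    unfolding vanishing_def
    using copy[of "{3}"] copy[of "{4}"] copy[of "{3,4}"] copy[of "{5,6}"] copy[of "{3,4,5,6}"] copy_indep
    by (simp add: secret_indep secret_determined V1_unqualified V1_qualified vQ_def)
  moreover have "2 * (4 * h {2} + h {3} + h {4} + h {5} + h {6} - 9 * h {0}) = shannon - vanishing"
    using h unfolding shannon_def vanishing_def cond_ent_def mutual_info_def polymatroid_def
    by (simp add: insert_commute)
  ultimately show ?thesis by simp
qed

lemma ss_scheme_secret_indep:
  assumes "ss_scheme p s P \<Gamma>" "X \<subseteq> P" "X \<noteq> {}" "X \<notin> \<Gamma>"
  shows "mutual_info (entropy p) {s} X {} = 0"
proof -
  have "cond_entropy p {s} X = entropy p {s}"
    using assms unfolding ss_scheme_def by blast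
  then have "entropy p ({s} \<union> X) = entropy p X + entropy p {s}"
    by (simp add: cond_entropy_def)
  moreover have "entropy p {} = 0"
    using assms(1) by (simp add: ss_scheme_def entropy_empty)
  ultimately show ?thesis by (simp add: mutual_info_def)
qed

lemma ss_scheme_secret_determined:
  assumes "ss_scheme p s P \<Gamma>" "X \<in> \<Gamma>"
  shows "cond_ent (entropy p) {s} X = 0"
  using assms by (simp add: ss_scheme_def cond_entropy_def cond_ent_def)

lemma vamos_scheme_entropy_bound:
  fixes p :: "(nat \<Rightarrow> 'v) pmf"
  assumes ss: "ss_scheme p 0 vQ V1"
  shows "9 * entropy p {0} \<le> 4 * entropy p {2} + entropy p {3} + entropy p {4} + entropy p {5} + entropy p {6}"
proof -
  have fin: "finite (set_pmf p)" using ss by (simp add: ss_scheme_def)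
  define q where "q = copy_pmf p {3,4,5,6} {9,10} (\<lambda>i. if i = 9 then 0 else 2)"
  have same: "entropy q W = entropy p W" if "9 \<notin> W" "10 \<notin> W" for W
    unfolding q_def using that by (intro copy_pmf_entropy_disjoint) auto
  have "9 * entropy q {0} \<le> 4 * entropy q {2} + entropy q {3} + entropy q {4} + entropy q {5} + entropy q {6}"
  proof (rule vamos_copy_polymatroid_bound)
    show "polymatroid (entropy q)"
      unfolding q_def by (intro polymatroid_entropy finite_copy_pmf fin)
    show "mutual_info (entropy q) {0} X {} = 0" if "X \<subseteq> vQ" "X \<noteq> {}" "X \<notin> V1" for X
    proof -
      have "9 \<notin> X" "10 \<notin> X" using that(1) by (auto simp: vQ_def)
      then show ?thesis
        using ss_scheme_secret_indep[OF ss that] unfolding mutual_info_def by (simp add: same)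
    qed
    show "cond_ent (entropy q) {0} X = 0" if "X \<in> V1" for X
    proof -
      have "9 \<notin> X" "10 \<notin> X" using that by (auto simp: V1_def vQ_def)
      then show ?thesis
        using ss_scheme_secret_determined[OF ss that] unfolding cond_ent_def by (simp add: same)
    qed
    show "entropy q (W \<union> {9,10}) = entropy q (W \<union> {0,2})" if "W \<subseteq> {3,4,5,6}" for W
    proof -
      have "entropy q (W \<union> {9,10}) = entropy p (W \<union> {0,2})"
        unfolding q_def using copy_pmf_entropy_copy[OF fin that, of "{9,10}"] by auto
      also have "\<dots> = entropy q (W \<union> {0,2})"
        using that by (intro same[symmetric]) auto
      finally show ?thesis .
    qed
    show "mutual_info (entropy q) {0,1,2,3,4,5,6,7,8} {9,10} {3,4,5,6} = 0"
      unfolding q_def by (rule copy_pmf_cond_indep[OF fin]) auto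
  qed
  then show ?thesis by (simp add: same)
qed

lemma vamos_scheme_rate_bound:
  fixes p :: "(nat \<Rightarrow> 'v) pmf"
  assumes ss: "ss_scheme p 0 vQ V1" and pos: "entropy p {0} > 0"
  shows "scheme_rate p 0 vQ \<le> ereal (19/21)"
proof -
  have "\<exists>x\<in>{2,3,4,5,6::nat}. 9 * entropy p {0} \<le> 8 * entropy p {x}"
  proof (rule ccontr)
    assume "\<not> ?thesis"
    then have "8 * entropy p {x} < 9 * entropy p {0}" if "x \<in> {2,3,4,5,6}" for x
      using that by (auto simp: not_le)
    then show False
      using vamos_scheme_entropy_bound[OF ss] by (smt (verit) insertCI)
  qed
  then obtain x where x: "x \<in> {2,3,4,5,6::nat}" "9 * entropy p {0} \<le> 8 * entropy p {x}" ..
  have Hx: "entropy p {x} > 0" using x(2) pos by linarith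
  have "entropy p {0} / entropy p {x} \<le> 19/21"
    using Hx x(2) by (simp add: divide_le_eq)
  then have "(if entropy p {x} = 0 then \<infinity> else ereal (entropy p {0} / entropy p {x})) \<le> ereal (19/21)"
    using Hx by simp
  moreover have "x \<in> vQ" using x(1) by (auto simp: vQ_def)
  ultimately show ?thesis unfolding scheme_rate_def by (rule INF_lower2[rotated])
qed

theorem mainTheorem2:
  shows "(\<forall>p :: (nat \<Rightarrow> 'v) pmf. ss_scheme p 0 vQ V1 \<and> entropy p {0} > 0
            \<longrightarrow> scheme_rate p 0 vQ \<le> ereal (19/21))
         \<and> access_rate 0 vQ V1 \<le> ereal (19/21)"
proof
  show "\<forall>p :: (nat \<Rightarrow> 'v) pmf. ss_scheme p 0 vQ V1 \<and> entropy p {0} > 0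
      \<longrightarrow> scheme_rate p 0 vQ \<le> ereal (19/21)"
    using vamos_scheme_rate_bound by blast
  show "access_rate 0 vQ V1 \<le> ereal (19/21)"
    unfolding access_rate_def by (rule SUP_least) (auto intro: vamos_scheme_rate_bound)
qed

end
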